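(* Let $P=\{p_1,\dots,p_d\}$ be a maximal ranked poset of rank $n$, with rank levels $P_0,\dots,P_n$. (a) Let $I$ and $J$ be poset ideals of $P$ with $I\neq J$. Then $\{I,J\}\in E^{*}_{\mathcal O(P)}$ if and only if $I=\emptyset$, $J$ is connected in $P$, and $|\max(J)|\ge 2$. (b) Let $A$ and $B$ be antichains of $P$ with $A\neq B$. Then $\{A,B\}\in E^{*}_{\mathcal C(P)}$ if and only if there exists some $\ell$ with $1\le \ell\le n$ such that $A=P_{\ell-1}$, $B\subset P_\ell$, and $|B|\ge 2$.
   Context: For a finite poset $P=\{p_1,\dots,p_d\}$ and $W\subset P$ put $\rho(W)=\sum_{p_i\in W}\mathbf e_i\in\mathbb R^d$ ($\rho(\emptyset)=0$). The order polytope is $\mathcal O(P)=\{x\in\mathbb R^d: 0\le x_i\le 1 \text{ for all } i,\ x_i\ge x_j \text{ if } p_i\le p_j\}$ and the chain polytope is $\mathcal C(P)=\{x\in\mathbb R^d: x_i\ge 0 \text{ for all } i,\ x_{i_1}+\dots+x_{i_k}\le 1 \text{ if } p_{i_1}<\dots<p_{i_k}\}$. Poset ideals and antichains include $\emptyset$. For a poset ideal $I$, $\max(I)$ is its set of maximal elements; for an antichain $A$, $\langle A\rangle=\{x: x\le p \text{ for some } p\in A\}$. A nonempty subset $Q\subset P$ is connected in $P$ if the induced subgraph of the comparability graph of $P$ on $Q$ is connected. $E^{*}_{\mathcal O(P)}$ is the set of pairs $\{I,J\}$ of distinct poset ideals such that $\mathrm{conv}\{\rho(I),\rho(J)\}$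 is an edge of $\mathcal O(P)$ but $\mathrm{conv}\{\rho(\max I),\rho(\max J)\}$ is not an edge of $\mathcal C(P)$. $E^{*}_{\mathcal C(P)}$ is the set of pairs $\{A,B\}$ of distinct antichains such that $\mathrm{conv}\{\rho(A),\rho(B)\}$ is an edge of $\mathcal C(P)$ but $\mathrm{conv}\{\rho(\langle A\rangle),\rho(\langle B\rangle)\}$ is not an edge of $\mathcal O(P)$. The length of a chain $C$ is $|C|-1$; $P$ is graded of rank $n$ if every maximal chain has length $n$, and then $P=\bigcup_{i=0}^n P_i$ where every maximal chain is $p_0<p_1<\dots<p_n$ with $p_i\in P_i$ ($P_i$ = elements of rank $i$). $P$ is a maximal ranked poset if it is graded and any two elements of distinct ranks are comparable. *)

theory Defs
  imports "HOL-Analysis.Analysis"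
begin

text \<open>The poset P is the finite type 'n (so d = CARD('n)) with order relation le;
  vectors in R^d are real^'n, the coordinate of element i being x$i.\<close>

definition poset_order :: "('n \<Rightarrow> 'n \<Rightarrow> bool) \<Rightarrow> bool" where
  "poset_order le \<longleftrightarrow> (\<forall>x. le x x) \<and> (\<forall>x y. le x y \<and> le y x \<longrightarrow> x = y)
      \<and> (\<forall>x y z. le x y \<and> le y z \<longrightarrow> le x z)"

definition rho :: "'n::finite set \<Rightarrow> real ^ 'n" where
  "rho W = (\<chi> i. if i \<in> W then 1 else 0)"

definition is_chain :: "('n \<Rightarrow> 'n \<Rightarrow> bool) \<Rightarrow> 'n set \<Rightarrow> bool" where
  "is_chain le C \<longleftrightarrow> (\<forall>x\<in>C. \<forall>y\<in>C. le x y \<or> le y x)"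

definition is_antichain :: "('n \<Rightarrow> 'n \<Rightarrow> bool) \<Rightarrow> 'n set \<Rightarrow> bool" where
  "is_antichain le A \<longleftrightarrow> (\<forall>x\<in>A. \<forall>y\<in>A. le x y \<longrightarrow> x = y)"

definition is_ideal :: "('n \<Rightarrow> 'n \<Rightarrow> bool) \<Rightarrow> 'n set \<Rightarrow> bool" where
  "is_ideal le I \<longleftrightarrow> (\<forall>x y. y \<in> I \<and> le x y \<longrightarrow> x \<in> I)"

definition order_polytope :: "('n::finite \<Rightarrow> 'n \<Rightarrow> bool) \<Rightarrow> (real ^ 'n) set" where
  "order_polytope le = {x. (\<forall>i. 0 \<le> x $ i \<and> x $ i \<le> 1) \<and> (\<forall>i j. le i j \<longrightarrow> x $ i \<ge> x $ j)}"

definition chain_polytope :: "('n::finite \<Rightarrow> 'n \<Rightarrow> bool) \<Rightarrow> (real ^ 'n) set" where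
  "chain_polytope le = {x. (\<forall>i. 0 \<le> x $ i) \<and> (\<forall>C. is_chain le C \<longrightarrow> (\<Sum>i\<in>C. x $ i) \<le> 1)}"

definition maxs :: "('n \<Rightarrow> 'n \<Rightarrow> bool) \<Rightarrow> 'n set \<Rightarrow> 'n set" where
  "maxs le I = {x \<in> I. \<forall>y\<in>I. le x y \<longrightarrow> y = x}"

definition down :: "('n \<Rightarrow> 'n \<Rightarrow> bool) \<Rightarrow> 'n set \<Rightarrow> 'n set" where
  "down le A = {x. \<exists>p\<in>A. le x p}"

definition is_edge :: "(real ^ 'n) set \<Rightarrow> (real ^ 'n) set \<Rightarrow> bool" where
  "is_edge K e \<longleftrightarrow> e face_of K \<and> aff_dim e = 1"

definition E_star_O :: "('n::finite \<Rightarrow> 'n \<Rightarrow> bool) \<Rightarrow> 'n set \<Rightarrow> 'n set \<Rightarrow> bool" where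
  "E_star_O le I J \<longleftrightarrow> is_ideal le I \<and> is_ideal le J \<and> I \<noteq> J
     \<and> is_edge (order_polytope le) (convex hull {rho I, rho J})
     \<and> \<not> is_edge (chain_polytope le) (convex hull {rho (maxs le I), rho (maxs le J)})"

definition E_star_C :: "('n::finite \<Rightarrow> 'n \<Rightarrow> bool) \<Rightarrow> 'n set \<Rightarrow> 'n set \<Rightarrow> bool" where
  "E_star_C le A B \<longleftrightarrow> is_antichain le A \<and> is_antichain le B \<and> A \<noteq> B
     \<and> is_edge (chain_polytope le) (convex hull {rho A, rho B})
     \<and> \<not> is_edge (order_polytope le) (convex hull {rho (down le A), rho (down le B)})"

definition connected_in :: "('n \<Rightarrow> 'n \<Rightarrow> bool) \<Rightarrow> 'n set \<Rightarrow> bool" where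
  "connected_in le Q \<longleftrightarrow> Q \<noteq> {} \<and>
     (\<forall>x\<in>Q. \<forall>y\<in>Q. (\<lambda>a b. a \<in> Q \<and> b \<in> Q \<and> (le a b \<or> le b a))\<^sup>*\<^sup>* x y)"

definition maximal_chain :: "('n \<Rightarrow> 'n \<Rightarrow> bool) \<Rightarrow> 'n set \<Rightarrow> bool" where
  "maximal_chain le C \<longleftrightarrow> is_chain le C \<and> (\<forall>D. is_chain le D \<and> C \<subseteq> D \<longrightarrow> D = C)"

text \<open>Graded of rank n: every maximal chain has length n (i.e. n+1 elements).\<close>
definition graded :: "('n::finite \<Rightarrow> 'n \<Rightarrow> bool) \<Rightarrow> nat \<Rightarrow> bool" where
  "graded le n \<longleftrightarrow> (\<forall>C. maximal_chain le C \<longrightarrow> card C = n + 1)"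

text \<open>P_i: elements occurring as p_i in a maximal chain p_0 < ... < p_n.\<close>
definition rank_level :: "('n::finite \<Rightarrow> 'n \<Rightarrow> bool) \<Rightarrow> nat \<Rightarrow> 'n set" where
  "rank_level le i = {x. \<exists>C. maximal_chain le C \<and> x \<in> C \<and> card {y\<in>C. le y x \<and> y \<noteq> x} = i}"

definition maximal_ranked :: "('n::finite \<Rightarrow> 'n \<Rightarrow> bool) \<Rightarrow> nat \<Rightarrow> bool" where
  "maximal_ranked le n \<longleftrightarrow> graded le n \<and>
     (\<forall>i j x y. i \<noteq> j \<and> x \<in> rank_level le i \<and> y \<in> rank_level le j \<longrightarrow> le x y \<or> le y x)"

end

theory Submission
  imports Defs
begin

text \<open>Two ideals I \<subset> J span an edge of
  O(P) iff J - I is connected, and two antichains span an edge of C(P) iff their symmetric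
  difference is connected: the segment is cut out by the defining inequalities tight at both
  ends, while a splitting of the difference into two mutually incomparable parts yields two
  further vertices with the same midpoint. In a maximal ranked poset x < y iff rank x < rank y,
  so a nonempty set is disconnected iff it is an antichain inside one rank level with at least
  two elements, and a nonempty ideal consists of all elements of rank below some k together
  with part of level k. Comparing the two connectivity conditions leaves exactly the listed pairs.\<close>

lemma closed_segment_face_ofI:
  fixes K :: "(real^'n) set" and L :: "((real^'n \<Rightarrow> real) \<times> real) set"
  assumes "convex K" "u \<in> K" "v \<in> K"
    and valid: "\<And>g c x. (g, c) \<in> L \<Longrightarrow> x \<in> K \<Longrightarrow> g x \<le> c"
    and affine: "\<And>g c a b t. (g, c) \<in> L \<Longrightarrow> g ((1 - t) *\<^sub>R a + t *\<^sub>R b) = (1 - t) * g a + t * g b"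
    and tight_u: "\<And>g c. (g, c) \<in> L \<Longrightarrow> g u = c"
    and tight_v: "\<And>g c. (g, c) \<in> L \<Longrightarrow> g v = c"
    and tight_segment: "\<And>x. x \<in> K \<Longrightarrow> (\<And>g c. (g, c) \<in> L \<Longrightarrow> g x = c) \<Longrightarrow> x \<in> closed_segment u v"
  shows "closed_segment u v face_of K"
  unfolding face_of_def
proof (intro conjI ballI impI)
  show "closed_segment u v \<subseteq> K"
    using assms(1-3) by (simp add: closed_segment_subset)
  show "convex (closed_segment u v)"
    by simp
  fix a b x
  assume a: "a \<in> K" and b: "b \<in> K" and x: "x \<in> closed_segment u v" and "x \<in> open_segment a b"
  then obtain t where t: "0 < t" "t < 1" "x = (1 - t) *\<^sub>R a + t *\<^sub>R b"
    by (auto simp: in_segment)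
  have tight_ab: "g a = c \<and> g b = c" if gc: "(g, c) \<in> L" for g c
  proof -
    obtain s where "x = (1 - s) *\<^sub>R u + s *\<^sub>R v"
      using x by (auto simp: in_segment)
    then have "g x = (1 - s) * c + s * c"
      using affine[OF gc, of s u v] tight_u[OF gc] tight_v[OF gc] by simp
    then have "(1 - t) * g a + t * g b = (1 - t) * c + t * c"
      using affine[OF gc, of t a b] t by (simp add: algebra_simps)
    moreover have "(1 - t) * g a \<le> (1 - t) * c" "t * g b \<le> t * c"
      using valid[OF gc] a b t by (simp_all add: mult_left_mono)
    ultimately have "(1 - t) * g a = (1 - t) * c" "t * g b = t * c"
      by linarith+
    then show ?thesis
      using t by simp
  qed
  show "a \<in> closed_segment u v"
    by (rule tight_segment[OF a]) (use tight_ab in blast)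
  show "b \<in> closed_segment u v"
    by (rule tight_segment[OF b]) (use tight_ab in blast)
qed

lemma closed_segment_face_of_sum_mem:
  fixes K :: "(real^'n) set"
  assumes "closed_segment u v face_of K" "a \<in> K" "b \<in> K" "a + b = u + v"
  shows "a \<in> closed_segment u v"
proof -
  have mid: "midpoint a b = midpoint u v"
    using assms(4) by (simp add: midpoint_def)
  show ?thesis
  proof (cases "a = b")
    case True
    then show ?thesis
      using mid by simp
  next
    case False
    then have "midpoint u v \<in> open_segment a b"
      using mid by (metis midpoint_in_open_segment)
    then show ?thesis
      using face_ofD[OF assms(1) _ assms(2,3)] midpoint_in_closed_segment by blast
  qed
qed

lemma is_edge_convex_hull_pair:
  fixes u v :: "real^'n"
  shows "is_edge K (convex hull {u, v}) \<longleftrightarrow> closed_segment u v face_of K \<and> u \<noteq> v"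
  by (simp add: is_edge_def aff_dim_convex_hull segment_convex_hull)

lemma rho_nth [simp]: "rho W $ i = (if i \<in> W then 1 else 0)"
  by (simp add: rho_def)

lemma rho_eq_iff [simp]: "rho X = rho Y \<longleftrightarrow> X = Y"
  by (auto simp: vec_eq_iff)

lemma rho_in_closed_segment_iff:
  "rho X \<in> closed_segment (rho I) (rho J) \<longleftrightarrow> X = I \<or> X = J"
proof
  assume "rho X \<in> closed_segment (rho I) (rho J)"
  then obtain t where t: "0 \<le> t" "t \<le> 1" and X: "rho X = (1 - t) *\<^sub>R rho I + t *\<^sub>R rho J"
    by (auto simp: in_segment)
  consider "t = 0" | "t = 1" | "0 < t" "t < 1"
    using t by linarith
  then show "X = I \<or> X = J"
  proof cases
    case 3
    have "i \<in> I \<longleftrightarrow> i \<in> J" for i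
      using arg_cong[OF X, of "\<lambda>x. x $ i"] 3 by (auto split: if_splits)
    then have "I = J"
      by blast
    then show ?thesis
      using X by (simp add: scaleR_collapse)
  qed (use X in simp_all)
qed auto

text \<open>Exchanging elements between I and J in two complementary ways gives two points of K
  whose midpoint is that of rho I and rho J; so the segment is no face unless the exchange is trivial.\<close>
lemma not_is_edge_rho_exchange:
  assumes "rho X \<in> K" "rho Y \<in> K" "X \<inter> Y = I \<inter> J" "X \<union> Y = I \<union> J" "X \<noteq> I" "X \<noteq> J"
  shows "\<not> is_edge K (convex hull {rho I, rho J})"
proof
  assume "is_edge K (convex hull {rho I, rho J})"
  moreover have "rho X + rho Y = rho I + rho J"
    using assms(3,4) by (auto simp: vec_eq_iff)
  ultimately have "rho X \<in> closed_segment (rho I) (rho J)"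
    using assms(1,2) closed_segment_face_of_sum_mem
    unfolding is_edge_convex_hull_pair by blast
  then show False
    using assms(5,6) by (simp add: rho_in_closed_segment_iff)
qed

lemma poset_order_refl: "poset_order le \<Longrightarrow> le x x"
  unfolding poset_order_def by blast

lemma poset_order_antisym: "poset_order le \<Longrightarrow> le x y \<Longrightarrow> le y x \<Longrightarrow> x = y"
  unfolding poset_order_def by blast

lemma poset_order_trans: "poset_order le \<Longrightarrow> le x y \<Longrightarrow> le y z \<Longrightarrow> le x z"
  unfolding poset_order_def by blast

lemma connected_in_singleton: "connected_in le {x}"
  by (simp add: connected_in_def)

lemma connected_in_Un_complete_bipartite:
  assumes "U \<noteq> {}" "V \<noteq> {}" and comparable: "\<And>u v. u \<in> U \<Longrightarrow> v \<in> V \<Longrightarrow> le u v \<or> le v u"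
  shows "connected_in le (U \<union> V)"
  unfolding connected_in_def
proof (intro conjI ballI)
  let ?R = "\<lambda>a b. a \<in> U \<union> V \<and> b \<in> U \<union> V \<and> (le a b \<or> le b a)"
  obtain u0 v0 where u0: "u0 \<in> U" and v0: "v0 \<in> V"
    using assms(1,2) by blast
  have cross: "?R a b" if "a \<in> U \<and> b \<in> V \<or> a \<in> V \<and> b \<in> U" for a b
    using that comparable by blast
  fix x y
  assume "x \<in> U \<union> V" "y \<in> U \<union> V"
  then consider "x \<in> U \<and> y \<in> V \<or> x \<in> V \<and> y \<in> U" | "x \<in> U" "y \<in> U" | "x \<in> V" "y \<in> V"
    by blast
  then show "?R\<^sup>*\<^sup>* x y"
  proof cases
    case 1
    then show ?thesis
      using cross by blast
  next
    case 2
    then have "?R x v0" "?R v0 y"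
      using cross v0 by blast+
    then show ?thesis
      by (blast intro: converse_rtranclp_into_rtranclp)
  next
    case 3
    then have "?R x u0" "?R u0 y"
      using cross u0 by blast+
    then show ?thesis
      by (blast intro: converse_rtranclp_into_rtranclp)
  qed
qed (use assms in blast)

lemma connected_in_imp_constant:
  assumes "connected_in le Q" and "\<And>a b. a \<in> Q \<Longrightarrow> b \<in> Q \<Longrightarrow> le a b \<Longrightarrow> f a = f b"
    and "x \<in> Q" "y \<in> Q"
  shows "f x = f y"
proof -
  let ?R = "\<lambda>a b. a \<in> Q \<and> b \<in> Q \<and> (le a b \<or> le b a)"
  have "?R\<^sup>*\<^sup>* x y"
    using assms(1,3,4) by (simp add: connected_in_def)
  then show ?thesis
  proof (induction rule: rtranclp_induct)
    case (step y z)
    then show ?case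
      using assms(2) by metis
  qed simp
qed

lemma connected_in_antichain_iff:
  assumes "is_antichain le Q"
  shows "connected_in le Q \<longleftrightarrow> (\<exists>x. Q = {x})"
proof
  assume connected: "connected_in le Q"
  then obtain x where x: "x \<in> Q"
    by (auto simp: connected_in_def)
  have "y = x" if "y \<in> Q" for y
    using connected_in_imp_constant[OF connected, of id] assms x that
    by (simp add: is_antichain_def)
  then show "\<exists>x. Q = {x}"
    using x by blast
qed (auto simp: connected_in_singleton)

lemma not_connected_inE:
  assumes "Q \<noteq> {}" "\<not> connected_in le Q"
  obtains X Y where "X \<noteq> {}" "Y \<noteq> {}" "X \<union> Y = Q" "X \<inter> Y = {}"
    "\<And>x y. x \<in> X \<Longrightarrow> y \<in> Y \<Longrightarrow> \<not> le x y \<and> \<not> le y x"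
proof -
  let ?R = "\<lambda>a b. a \<in> Q \<and> b \<in> Q \<and> (le a b \<or> le b a)"
  obtain a b where ab: "a \<in> Q" "b \<in> Q" "\<not> ?R\<^sup>*\<^sup>* a b"
    using assms unfolding connected_in_def by blast
  define X where "X = {y \<in> Q. ?R\<^sup>*\<^sup>* a y}"
  have "\<not> le x y \<and> \<not> le y x" if "x \<in> X" "y \<in> Q - X" for x y
    using that rtranclp.rtrancl_into_rtrancl[of ?R a x y] by (auto simp: X_def)
  moreover have "a \<in> X" "b \<in> Q - X"
    using ab by (auto simp: X_def)
  moreover have "X \<union> (Q - X) = Q"
    by (auto simp: X_def)
  ultimately show ?thesis
    by (intro that[of X "Q - X"]) blast+
qed

lemma convex_order_polytope: "convex (order_polytope le)"
  unfolding convex_def order_polytope_def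
  by (auto intro!: convex_bound_le add_mono mult_left_mono)

lemma convex_chain_polytope: "convex (chain_polytope le)"
  unfolding convex_def chain_polytope_def
  by (auto simp: sum.distrib simp flip: sum_distrib_left intro!: convex_bound_le)

lemma rho_mem_order_polytope: "is_ideal le I \<Longrightarrow> rho I \<in> order_polytope le"
  by (auto simp: order_polytope_def is_ideal_def)

lemma rho_mem_chain_polytope:
  assumes "is_antichain le A"
  shows "rho A \<in> chain_polytope le"
proof -
  have "(\<Sum>i\<in>C. rho A $ i) \<le> 1" if "is_chain le C" for C
  proof -
    have "card (C \<inter> A) \<le> 1"
      using that assms by (auto simp: card_le_Suc0_iff_eq is_chain_def is_antichain_def)
    then show ?thesis
      by (simp add: sum.If_cases Int_def)
  qed
  then show ?thesis
    by (auto simp: chain_polytope_def)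
qed

lemma order_polytope_mem_closed_segment:
  assumes x: "x \<in> order_polytope le" and "I \<subseteq> J" and connected: "connected_in le (J - I)"
    and x_I: "\<And>i. i \<in> I \<Longrightarrow> x $ i = 1" and x_J: "\<And>i. i \<notin> J \<Longrightarrow> x $ i = 0"
    and x_diff: "\<And>i j. i \<in> J - I \<Longrightarrow> j \<in> J - I \<Longrightarrow> le i j \<Longrightarrow> x $ i = x $ j"
  shows "x \<in> closed_segment (rho I) (rho J)"
proof -
  obtain d where d: "d \<in> J - I"
    using connected by (auto simp: connected_in_def)
  have "x $ i = x $ d" if "i \<in> J - I" for i
    using connected_in_imp_constant[OF connected _ that d] x_diff by blast
  then have "x = (1 - x $ d) *\<^sub>R rho I + x $ d *\<^sub>R rho J"
    using x_I x_J \<open>I \<subseteq> J\<close> by (auto simp: vec_eq_iff)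
  moreover have "0 \<le> x $ d" "x $ d \<le> 1"
    using x by (auto simp: order_polytope_def)
  ultimately show ?thesis
    by (auto simp: in_segment)
qed

text \<open>The segment is cut out of the order polytope by the inequalities of the polytope that are
  tight at both ends: x_i = 1 on I, x_i = 0 outside J, x_i = x_j for comparable i, j in J - I.\<close>
lemma order_polytope_edgeI:
  fixes le :: "'n::finite \<Rightarrow> 'n \<Rightarrow> bool"
  assumes I: "is_ideal le I" and J: "is_ideal le J" and "I \<subseteq> J" and connected: "connected_in le (J - I)"
  shows "is_edge (order_polytope le) (convex hull {rho I, rho J})"
proof -
  define L :: "((real^'n \<Rightarrow> real) \<times> real) set" where
    "L = {((\<lambda>x. x $ i), 1) | i. i \<in> I} \<union> {((\<lambda>x. - (x $ i)), 0) | i. i \<notin> J}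
       \<union> {((\<lambda>x. x $ j - x $ i), 0) | i j. i \<in> J - I \<and> j \<in> J - I \<and> le i j}"
  have "I \<noteq> J"
    using connected by (auto simp: connected_in_def)
  moreover have "closed_segment (rho I) (rho J) face_of order_polytope le"
  proof (rule closed_segment_face_ofI[where L = L])
    show "convex (order_polytope le)"
      by (rule convex_order_polytope)
    show "rho I \<in> order_polytope le" "rho J \<in> order_polytope le"
      using I J by (simp_all add: rho_mem_order_polytope)
    show "g x \<le> c" if "(g, c) \<in> L" "x \<in> order_polytope le" for g c x
      using that unfolding L_def order_polytope_def by auto
    show "g ((1 - t) *\<^sub>R a + t *\<^sub>R b) = (1 - t) * g a + t * g b" if "(g, c) \<in> L" for g c a b t
      using that unfolding L_def by (auto simp: algebra_simps)
    show "g (rho I) = c" "g (rho J) = c" if "(g, c) \<in> L" for g c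
      using that \<open>I \<subseteq> J\<close> unfolding L_def by auto
  next
    fix x
    assume x: "x \<in> order_polytope le" and tight: "\<And>g c. (g, c) \<in> L \<Longrightarrow> g x = c"
    show "x \<in> closed_segment (rho I) (rho J)"
    proof (rule order_polytope_mem_closed_segment[OF x \<open>I \<subseteq> J\<close> connected])
      show "x $ i = 1" if "i \<in> I" for i
        using tight[of "\<lambda>x. x $ i" 1] that unfolding L_def by blast
      show "x $ i = 0" if "i \<notin> J" for i
        using tight[of "\<lambda>x. - (x $ i)" 0] that unfolding L_def by auto
      show "x $ i = x $ j" if "i \<in> J - I" "j \<in> J - I" "le i j" for i j
      proof -
        have "((\<lambda>x. x $ j - x $ i), 0) \<in> L"
          using that unfolding L_def by blast
        then show ?thesis
          using tight by fastforce
      qed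
    qed
  qed
  ultimately show ?thesis
    by (simp add: is_edge_convex_hull_pair)
qed

lemma order_polytope_edge_imp_subset:
  assumes "is_ideal le I" "is_ideal le J" "is_edge (order_polytope le) (convex hull {rho I, rho J})"
  shows "I \<subseteq> J \<or> J \<subseteq> I"
proof (rule ccontr)
  assume "\<not> (I \<subseteq> J \<or> J \<subseteq> I)"
  then have "I \<inter> J \<noteq> I" "I \<inter> J \<noteq> J"
    by blast+
  moreover have "is_ideal le (I \<inter> J)" "is_ideal le (I \<union> J)"
    using assms(1,2) unfolding is_ideal_def by blast+
  ultimately have "\<not> is_edge (order_polytope le) (convex hull {rho I, rho J})"
    by (intro not_is_edge_rho_exchange[where Y = "I \<union> J"] rho_mem_order_polytope) auto
  then show False
    using assms(3) by contradiction
qed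

lemma order_polytope_edge_imp_connected:
  assumes I: "is_ideal le I" and J: "is_ideal le J" and "I \<subseteq> J"
    and edge: "is_edge (order_polytope le) (convex hull {rho I, rho J})"
  shows "connected_in le (J - I)"
proof (rule ccontr)
  have "J - I \<noteq> {}"
    using edge \<open>I \<subseteq> J\<close> by (auto simp: is_edge_convex_hull_pair)
  moreover assume "\<not> connected_in le (J - I)"
  ultimately obtain X Y where XY: "X \<noteq> {}" "Y \<noteq> {}" "X \<union> Y = J - I" "X \<inter> Y = {}"
    and incomparable: "\<And>x y. x \<in> X \<Longrightarrow> y \<in> Y \<Longrightarrow> \<not> le x y \<and> \<not> le y x"
    by (metis not_connected_inE)
  have ideal: "is_ideal le (I \<union> X')"
    if "X' \<union> Y' = J - I" "\<And>x y. x \<in> X' \<Longrightarrow> y \<in> Y' \<Longrightarrow> \<not> le y x" for X' Y'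
    unfolding is_ideal_def
  proof (intro allI impI)
    fix a b
    assume "b \<in> I \<union> X' \<and> le a b"
    then show "a \<in> I \<union> X'"
      using I J that unfolding is_ideal_def by blast
  qed
  have "is_ideal le (I \<union> X)" "is_ideal le (I \<union> Y)"
    using ideal[of X Y] ideal[of Y X] XY incomparable by blast+
  moreover have "(I \<union> X) \<inter> (I \<union> Y) = I \<inter> J" "(I \<union> X) \<union> (I \<union> Y) = I \<union> J"
    "I \<union> X \<noteq> I" "I \<union> X \<noteq> J"
    using XY \<open>I \<subseteq> J\<close> by blast+
  ultimately have "\<not> is_edge (order_polytope le) (convex hull {rho I, rho J})"
    by (intro not_is_edge_rho_exchange[where Y = "I \<union> Y"] rho_mem_order_polytope)
  then show False
    using edge by contradiction
qed

lemma order_polytope_edge_iff: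
  assumes "is_ideal le I" "is_ideal le J"
  shows "is_edge (order_polytope le) (convex hull {rho I, rho J}) \<longleftrightarrow>
    (I \<subseteq> J \<and> connected_in le (J - I)) \<or> (J \<subseteq> I \<and> connected_in le (I - J))"
proof
  assume edge: "is_edge (order_polytope le) (convex hull {rho I, rho J})"
  then have edge': "is_edge (order_polytope le) (convex hull {rho J, rho I})"
    by (simp add: insert_commute)
  show "(I \<subseteq> J \<and> connected_in le (J - I)) \<or> (J \<subseteq> I \<and> connected_in le (I - J))"
    using order_polytope_edge_imp_subset[OF assms edge]
      order_polytope_edge_imp_connected[OF assms _ edge]
      order_polytope_edge_imp_connected[OF assms(2,1) _ edge'] by blast
next
  assume "(I \<subseteq> J \<and> connected_in le (J - I)) \<or> (J \<subseteq> I \<and> connected_in le (I - J))"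
  then show "is_edge (order_polytope le) (convex hull {rho I, rho J})"
  proof
    assume "J \<subseteq> I \<and> connected_in le (I - J)"
    then have "is_edge (order_polytope le) (convex hull {rho J, rho I})"
      using order_polytope_edgeI[OF assms(2,1)] by blast
    then show ?thesis
      by (simp add: insert_commute)
  qed (use order_polytope_edgeI[OF assms] in blast)
qed

lemma chain_polytope_pair_le_one:
  assumes "poset_order le" "x \<in> chain_polytope le" "le a b \<or> le b a" "a \<noteq> b"
  shows "x $ a + x $ b \<le> 1"
proof -
  have "is_chain le {a, b}"
    using assms(3) poset_order_refl[OF assms(1)] unfolding is_chain_def by blast
  then have "(\<Sum>i\<in>{a, b}. x $ i) \<le> 1"
    using assms(2) unfolding chain_polytope_def by blast
  then show ?thesis
    using assms(4) by simp
qed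

lemma chain_polytope_nth_le_one:
  assumes "poset_order le" "x \<in> chain_polytope le"
  shows "x $ a \<le> 1"
proof -
  have "is_chain le {a}"
    using poset_order_refl[OF assms(1)] unfolding is_chain_def by blast
  then have "(\<Sum>i\<in>{a}. x $ i) \<le> 1"
    using assms(2) unfolding chain_polytope_def by blast
  then show ?thesis
    by simp
qed

text \<open>Along a path in the symmetric difference, the tight constraints x_a + x_b = 1 force
  x_i = 1 - t on A - B and x_i = t on B - A for one t.\<close>
lemma chain_polytope_mem_closed_segment:
  assumes poset: "poset_order le" and A: "is_antichain le A" and B: "is_antichain le B"
    and connected: "connected_in le ((A - B) \<union> (B - A))" and x: "x \<in> chain_polytope le"
    and x_out: "\<And>i. i \<notin> A \<union> B \<Longrightarrow> x $ i = 0" and x_AB: "\<And>i. i \<in> A \<inter> B \<Longrightarrow> x $ i = 1"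
    and x_pair: "\<And>a b. a \<in> A - B \<Longrightarrow> b \<in> B - A \<Longrightarrow> le a b \<or> le b a \<Longrightarrow> x $ a + x $ b = 1"
  shows "x \<in> closed_segment (rho A) (rho B)"
proof -
  define f where "f i = (if i \<in> A then x $ i else 1 - x $ i)" for i
  obtain d where d: "d \<in> (A - B) \<union> (B - A)"
    using connected by (auto simp: connected_in_def)
  have f_d: "f i = f d" if "i \<in> (A - B) \<union> (B - A)" for i
  proof (rule connected_in_imp_constant[OF connected _ that d])
    fix a b
    assume ab: "a \<in> (A - B) \<union> (B - A)" "b \<in> (A - B) \<union> (B - A)" "le a b"
    show "f a = f b"
    proof (cases "a = b")
      case False
      then have "a \<in> A - B \<and> b \<in> B - A \<or> a \<in> B - A \<and> b \<in> A - B"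
        using ab A B unfolding is_antichain_def by blast
      then show ?thesis
        using x_pair[of a b] x_pair[of b a] ab(3) by (auto simp: f_def)
    qed simp
  qed
  have "x = f d *\<^sub>R rho A + (1 - f d) *\<^sub>R rho B"
  proof (rule vec_eq_iff[THEN iffD2], intro allI)
    fix i
    show "x $ i = (f d *\<^sub>R rho A + (1 - f d) *\<^sub>R rho B) $ i"
      using x_out[of i] x_AB[of i] f_d[of i] by (auto simp: f_def split: if_splits)
  qed
  moreover have "0 \<le> f d" "f d \<le> 1"
    using x chain_polytope_nth_le_one[OF poset x, of d] by (auto simp: f_def chain_polytope_def)
  ultimately show ?thesis
    unfolding in_segment by (intro disjI1 exI[of _ "1 - f d"]) auto
qed

lemma chain_polytope_edgeI:
  fixes le :: "'n::finite \<Rightarrow> 'n \<Rightarrow> bool"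
  assumes poset: "poset_order le" and A: "is_antichain le A" and B: "is_antichain le B"
    and connected: "connected_in le ((A - B) \<union> (B - A))"
  shows "is_edge (chain_polytope le) (convex hull {rho A, rho B})"
proof -
  define L :: "((real^'n \<Rightarrow> real) \<times> real) set" where
    "L = {((\<lambda>x. - (x $ i)), 0) | i. i \<notin> A \<union> B} \<union> {((\<lambda>x. x $ i), 1) | i. i \<in> A \<inter> B}
       \<union> {((\<lambda>x. x $ a + x $ b), 1) | a b. a \<in> A - B \<and> b \<in> B - A \<and> (le a b \<or> le b a)}"
  have "A \<noteq> B"
    using connected by (auto simp: connected_in_def)
  moreover have "closed_segment (rho A) (rho B) face_of chain_polytope le"
  proof (rule closed_segment_face_ofI[where L = L])
    show "convex (chain_polytope le)"
      by (rule convex_chain_polytope)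
    show "rho A \<in> chain_polytope le" "rho B \<in> chain_polytope le"
      using A B by (simp_all add: rho_mem_chain_polytope)
    show "g x \<le> c" if "(g, c) \<in> L" "x \<in> chain_polytope le" for g c x
      using that chain_polytope_pair_le_one[OF poset, of x] chain_polytope_nth_le_one[OF poset, of x]
      unfolding L_def by (auto simp: chain_polytope_def)
    show "g ((1 - t) *\<^sub>R a + t *\<^sub>R b) = (1 - t) * g a + t * g b" if "(g, c) \<in> L" for g c a b t
      using that unfolding L_def by (auto simp: algebra_simps)
    show "g (rho A) = c" "g (rho B) = c" if "(g, c) \<in> L" for g c
      using that unfolding L_def by auto
  next
    fix x
    assume x: "x \<in> chain_polytope le" and tight: "\<And>g c. (g, c) \<in> L \<Longrightarrow> g x = c"
    show "x \<in> closed_segment (rho A) (rho B)"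
    proof (rule chain_polytope_mem_closed_segment[OF poset A B connected x])
      show "x $ i = 0" if "i \<notin> A \<union> B" for i
        using tight[of "\<lambda>x. - (x $ i)" 0] that unfolding L_def by auto
      show "x $ i = 1" if "i \<in> A \<inter> B" for i
        using tight[of "\<lambda>x. x $ i" 1] that unfolding L_def by blast
      show "x $ a + x $ b = 1" if "a \<in> A - B" "b \<in> B - A" "le a b \<or> le b a" for a b
        using tight[of "\<lambda>x. x $ a + x $ b" 1] that unfolding L_def by blast
    qed
  qed
  ultimately show ?thesis
    by (simp add: is_edge_convex_hull_pair)
qed

lemma chain_polytope_edge_imp_connected:
  assumes A: "is_antichain le A" and B: "is_antichain le B"
    and edge: "is_edge (chain_polytope le) (convex hull {rho A, rho B})"
  shows "connected_in le ((A - B) \<union> (B - A))"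
proof (rule ccontr)
  have "(A - B) \<union> (B - A) \<noteq> {}"
    using edge by (auto simp: is_edge_convex_hull_pair)
  moreover assume "\<not> connected_in le ((A - B) \<union> (B - A))"
  ultimately obtain X Y where XY: "X \<noteq> {}" "Y \<noteq> {}" "X \<union> Y = (A - B) \<union> (B - A)" "X \<inter> Y = {}"
    and incomparable: "\<And>x y. x \<in> X \<Longrightarrow> y \<in> Y \<Longrightarrow> \<not> le x y \<and> \<not> le y x"
    by (metis not_connected_inE)
  have antichain: "is_antichain le ((A \<inter> B) \<union> (A \<inter> X') \<union> (B \<inter> Y'))"
    if "X' \<union> Y' = (A - B) \<union> (B - A)" "\<And>x y. x \<in> X' \<Longrightarrow> y \<in> Y' \<Longrightarrow> \<not> le x y \<and> \<not> le y x"
    for X' Y'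
    unfolding is_antichain_def
  proof (intro ballI impI)
    fix p q
    assume "p \<in> (A \<inter> B) \<union> (A \<inter> X') \<union> (B \<inter> Y')" "q \<in> (A \<inter> B) \<union> (A \<inter> X') \<union> (B \<inter> Y')" "le p q"
    then show "p = q"
      using A B that unfolding is_antichain_def by blast
  qed
  have "is_antichain le ((A \<inter> B) \<union> (A \<inter> X) \<union> (B \<inter> Y))"
    "is_antichain le ((A \<inter> B) \<union> (A \<inter> Y) \<union> (B \<inter> X))"
    using antichain[of X Y] antichain[of Y X] XY incomparable by blast+
  moreover have "((A \<inter> B) \<union> (A \<inter> X) \<union> (B \<inter> Y)) \<inter> ((A \<inter> B) \<union> (A \<inter> Y) \<union> (B \<inter> X)) = A \<inter> B"
    "((A \<inter> B) \<union> (A \<inter> X) \<union> (B \<inter> Y)) \<union> ((A \<inter> B) \<union> (A \<inter> Y) \<union> (B \<inter> X)) = A \<union> B"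
    "(A \<inter> B) \<union> (A \<inter> X) \<union> (B \<inter> Y) \<noteq> A" "(A \<inter> B) \<union> (A \<inter> X) \<union> (B \<inter> Y) \<noteq> B"
    using XY by blast+
  ultimately have "\<not> is_edge (chain_polytope le) (convex hull {rho A, rho B})"
    by (intro not_is_edge_rho_exchange[where Y = "(A \<inter> B) \<union> (A \<inter> Y) \<union> (B \<inter> X)"]
        rho_mem_chain_polytope)
  then show False
    using edge by contradiction
qed

lemma chain_polytope_edge_iff:
  assumes "poset_order le" "is_antichain le A" "is_antichain le B"
  shows "is_edge (chain_polytope le) (convex hull {rho A, rho B}) \<longleftrightarrow>
    connected_in le ((A - B) \<union> (B - A))"
  using chain_polytope_edgeI[OF assms] chain_polytope_edge_imp_connected[OF assms(2,3)] by blast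

definition chain_below :: "('n \<Rightarrow> 'n \<Rightarrow> bool) \<Rightarrow> 'n set \<Rightarrow> 'n \<Rightarrow> 'n set" where
  "chain_below le C x = {y \<in> C. le y x \<and> y \<noteq> x}"

definition chain_above :: "('n \<Rightarrow> 'n \<Rightarrow> bool) \<Rightarrow> 'n set \<Rightarrow> 'n \<Rightarrow> 'n set" where
  "chain_above le C x = {y \<in> C. le x y \<and> y \<noteq> x}"

lemma exists_maximal_chain_superset:
  fixes le :: "'n::finite \<Rightarrow> 'n \<Rightarrow> bool"
  assumes "is_chain le C0"
  obtains C where "maximal_chain le C" "C0 \<subseteq> C"
proof -
  have "{D. is_chain le D \<and> C0 \<subseteq> D} \<noteq> {}"
    using assms by blast
  then obtain C where C: "C \<in> {D. is_chain le D \<and> C0 \<subseteq> D}"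
    and maximal: "\<forall>D \<in> {D. is_chain le D \<and> C0 \<subseteq> D}. C \<subseteq> D \<longrightarrow> C = D"
    using finite_has_maximal[of "{D. is_chain le D \<and> C0 \<subseteq> D}"] by auto
  then have "maximal_chain le C"
    unfolding maximal_chain_def by blast
  then show ?thesis
    using C that by blast
qed

lemma exists_maximal_chain_mem:
  fixes le :: "'n::finite \<Rightarrow> 'n \<Rightarrow> bool"
  assumes "poset_order le"
  obtains C where "maximal_chain le C" "x \<in> C"
proof -
  have "is_chain le {x}"
    using poset_order_refl[OF assms] by (simp add: is_chain_def)
  then obtain C where "maximal_chain le C" "{x} \<subseteq> C"
    by (rule exists_maximal_chain_superset)
  then show ?thesis
    using that by blast
qed

lemma maximal_chain_memI:
  assumes "poset_order le" "maximal_chain le C" "\<And>w. w \<in> C \<Longrightarrow> le z w \<or> le w z"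
  shows "z \<in> C"
proof -
  have "le z z"
    using assms(1) by (rule poset_order_refl)
  then have "is_chain le (insert z C)"
    using assms(2,3) unfolding maximal_chain_def is_chain_def by blast
  then show ?thesis
    using assms(2) unfolding maximal_chain_def by blast
qed

lemma chain_split_at:
  assumes "is_chain le C" "x \<in> C"
  shows "C = chain_below le C x \<union> {x} \<union> chain_above le C x"
  using assms unfolding is_chain_def chain_below_def chain_above_def by blast

lemma card_chain_below_above:
  fixes le :: "'n::finite \<Rightarrow> 'n \<Rightarrow> bool"
  assumes "poset_order le"
  shows "card (chain_below le C x \<union> {x} \<union> chain_above le C' x)
    = card (chain_below le C x) + 1 + card (chain_above le C' x)"
proof -
  have "chain_below le C x \<inter> chain_above le C' x = {}"
    using poset_order_antisym[OF assms] unfolding chain_below_def chain_above_def by blast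
  moreover have "x \<notin> chain_below le C x" "x \<notin> chain_above le C' x"
    by (simp_all add: chain_below_def chain_above_def)
  ultimately show ?thesis
    by (simp add: card_Un_disjoint)
qed

lemma maximal_chain_mem_if_below:
  assumes poset: "poset_order le" and C: "maximal_chain le C" and "x \<in> C" "le z x"
    and comparable: "\<And>w. w \<in> chain_below le C x \<Longrightarrow> le z w \<or> le w z"
  shows "z \<in> C"
proof (rule maximal_chain_memI[OF poset C])
  fix w
  assume "w \<in> C"
  then have "w \<in> chain_below le C x \<or> le x w"
    using C \<open>x \<in> C\<close> unfolding maximal_chain_def is_chain_def chain_below_def by blast
  then show "le z w \<or> le w z"
    using comparable[of w] poset_order_trans[OF poset \<open>le z x\<close>, of w] by blast
qed

lemma maximal_chain_mem_if_above:
  assumes poset: "poset_order le" and C: "maximal_chain le C" and "x \<in> C" "le x z"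
    and comparable: "\<And>w. w \<in> chain_above le C x \<Longrightarrow> le z w \<or> le w z"
  shows "z \<in> C"
proof (rule maximal_chain_memI[OF poset C])
  fix w
  assume "w \<in> C"
  then have "w \<in> chain_above le C x \<or> le w x"
    using C \<open>x \<in> C\<close> unfolding maximal_chain_def is_chain_def chain_above_def by blast
  then show "le z w \<or> le w z"
    using comparable[of w] poset_order_trans[OF poset _ \<open>le x z\<close>, of w] by blast
qed

lemma is_chain_splice:
  assumes poset: "poset_order le" and "is_chain le C" "is_chain le C'" "x \<in> C"
  shows "is_chain le (chain_below le C' x \<union> {x} \<union> chain_above le C x)"
  unfolding is_chain_def
proof (intro ballI)
  fix a b
  assume "a \<in> chain_below le C' x \<union> {x} \<union> chain_above le C x"
    "b \<in> chain_below le C' x \<union> {x} \<union> chain_above le C x"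
  then have "a \<in> C' \<and> le a x \<or> a \<in> C \<and> le x a" "b \<in> C' \<and> le b x \<or> b \<in> C \<and> le x b"
    using \<open>x \<in> C\<close> poset_order_refl[OF poset, of x] unfolding chain_below_def chain_above_def by blast+
  then show "le a b \<or> le b a"
    using assms(2,3) poset_order_trans[OF poset, of a x b] poset_order_trans[OF poset, of b x a]
    unfolding is_chain_def by blast
qed

lemma maximal_chain_splice:
  assumes poset: "poset_order le" and C: "maximal_chain le C" and C': "maximal_chain le C'"
    and "x \<in> C" "x \<in> C'"
  shows "maximal_chain le (chain_below le C' x \<union> {x} \<union> chain_above le C x)"
    (is "maximal_chain le ?D")
proof -
  have "is_chain le ?D"
    using C C' \<open>x \<in> C\<close> by (intro is_chain_splice[OF poset]) (simp_all add: maximal_chain_def)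
  moreover have "z \<in> ?D" if E: "is_chain le E" "?D \<subseteq> E" and z: "z \<in> E" for E z
  proof -
    have comparable: "le z w \<or> le w z" if "w \<in> ?D" for w
      using E z that unfolding is_chain_def by blast
    have "le z x \<or> le x z"
      using comparable by blast
    then show ?thesis
    proof
      assume "le z x"
      then have "z \<in> C'"
        using maximal_chain_mem_if_below[OF poset C' \<open>x \<in> C'\<close>] comparable by blast
      then show ?thesis
        using \<open>le z x\<close> unfolding chain_below_def by blast
    next
      assume "le x z"
      then have "z \<in> C"
        using maximal_chain_mem_if_above[OF poset C \<open>x \<in> C\<close>] comparable by blast
      then show ?thesis
        using \<open>le x z\<close> unfolding chain_above_def by blast
    qed
  qed
  ultimately show ?thesis
    unfolding maximal_chain_def by blast
qed

lemma card_chain_below_eq: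
  fixes le :: "'n::finite \<Rightarrow> 'n \<Rightarrow> bool"
  assumes poset: "poset_order le" and "graded le n"
    and C: "maximal_chain le C" and C': "maximal_chain le C'" and x: "x \<in> C" "x \<in> C'"
  shows "card (chain_below le C x) = card (chain_below le C' x)"
proof -
  have "card C = card (chain_below le C x) + 1 + card (chain_above le C x)"
    using chain_split_at[of le C x] card_chain_below_above[OF poset] C x
    by (metis maximal_chain_def)
  moreover have "card (chain_below le C' x \<union> {x} \<union> chain_above le C x) = card C"
    using maximal_chain_splice[OF poset C C' x] C \<open>graded le n\<close> by (simp add: graded_def)
  ultimately show ?thesis
    using card_chain_below_above[OF poset, of C' x C] by simp
qed

definition poset_rank :: "('n::finite \<Rightarrow> 'n \<Rightarrow> bool) \<Rightarrow> 'n \<Rightarrow> nat" where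
  "poset_rank le x = card (chain_below le (SOME C. maximal_chain le C \<and> x \<in> C) x)"

lemma poset_rank_eq:
  fixes le :: "'n::finite \<Rightarrow> 'n \<Rightarrow> bool"
  assumes poset: "poset_order le" and "graded le n" and C: "maximal_chain le C" "x \<in> C"
  shows "poset_rank le x = card (chain_below le C x)"
proof -
  obtain C0 where "maximal_chain le C0" "x \<in> C0"
    using exists_maximal_chain_mem[OF poset] .
  then have "maximal_chain le (SOME C. maximal_chain le C \<and> x \<in> C) \<and> x \<in> (SOME C. maximal_chain le C \<and> x \<in> C)"
    by (intro someI_ex[of "\<lambda>C. maximal_chain le C \<and> x \<in> C"]) blast
  then show ?thesis
    unfolding poset_rank_def using card_chain_below_eq[OF poset \<open>graded le n\<close> _ C(1) _ C(2)] by blast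
qed

lemma rank_level_eq:
  fixes le :: "'n::finite \<Rightarrow> 'n \<Rightarrow> bool"
  assumes poset: "poset_order le" and "graded le n"
  shows "rank_level le i = {x. poset_rank le x = i}"
proof (intro set_eqI iffI)
  fix x
  assume "x \<in> rank_level le i"
  then show "x \<in> {x. poset_rank le x = i}"
    using poset_rank_eq[OF assms] unfolding rank_level_def chain_below_def by auto
next
  fix x
  assume "x \<in> {x. poset_rank le x = i}"
  moreover obtain C where "maximal_chain le C" "x \<in> C"
    using exists_maximal_chain_mem[OF poset] .
  ultimately show "x \<in> rank_level le i"
    using poset_rank_eq[OF assms] unfolding rank_level_def chain_below_def by auto
qed

lemma poset_rank_less:
  fixes le :: "'n::finite \<Rightarrow> 'n \<Rightarrow> bool"
  assumes poset: "poset_order le" and "graded le n" and "le x y" "x \<noteq> y"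
  shows "poset_rank le x < poset_rank le y"
proof -
  have "is_chain le {x, y}"
    using assms(3) poset_order_refl[OF poset] unfolding is_chain_def by blast
  then obtain C where C: "maximal_chain le C" "{x, y} \<subseteq> C"
    by (rule exists_maximal_chain_superset)
  have "chain_below le C x \<subset> chain_below le C y"
    using assms(3,4) C(2) poset_order_trans[OF poset _ assms(3)] poset_order_antisym[OF poset _ assms(3)]
    unfolding chain_below_def by blast
  then show ?thesis
    using C poset_rank_eq[OF assms(1,2) C(1)] by (simp add: psubset_card_mono)
qed

lemma poset_rank_le:
  fixes le :: "'n::finite \<Rightarrow> 'n \<Rightarrow> bool"
  assumes poset: "poset_order le" and "graded le n"
  shows "poset_rank le x \<le> n"
proof -
  obtain C where C: "maximal_chain le C" "x \<in> C"
    using exists_maximal_chain_mem[OF poset] .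
  then have "card (chain_below le C x) < card C"
    by (intro psubset_card_mono) (auto simp: chain_below_def)
  then show ?thesis
    using poset_rank_eq[OF assms C] C(1) \<open>graded le n\<close> by (simp add: graded_def)
qed

text \<open>The ranks along a maximal chain are n + 1 distinct numbers in {..n}.\<close>
lemma exists_poset_rank:
  fixes le :: "'n::finite \<Rightarrow> 'n \<Rightarrow> bool"
  assumes poset: "poset_order le" and graded: "graded le n" and "i \<le> n"
  shows "\<exists>x. poset_rank le x = i"
proof -
  obtain C where C: "maximal_chain le C"
    using exists_maximal_chain_mem[OF poset] by blast
  have "inj_on (poset_rank le) C"
  proof (rule inj_onI)
    fix x y
    assume "x \<in> C" "y \<in> C" "poset_rank le x = poset_rank le y"
    then show "x = y"
      using C poset_rank_less[OF poset graded, of x y] poset_rank_less[OF poset graded, of y x]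
      unfolding maximal_chain_def is_chain_def by force
  qed
  then have "card (poset_rank le ` C) = card {..n}"
    using C graded by (simp add: card_image graded_def)
  moreover have "poset_rank le ` C \<subseteq> {..n}"
    using poset_rank_le[OF poset graded] by auto
  ultimately have "poset_rank le ` C = {..n}"
    by (simp add: card_subset_eq)
  then show ?thesis
    using \<open>i \<le> n\<close> by (metis atMost_iff imageE)
qed

lemma maxs_antichain: "is_antichain le (maxs le J)"
  unfolding is_antichain_def maxs_def by blast

lemma is_ideal_down:
  assumes "poset_order le"
  shows "is_ideal le (down le A)"
  unfolding is_ideal_def down_def using poset_order_trans[OF assms] by blast

lemma E_star_O_commute: "E_star_O le I J \<longleftrightarrow> E_star_O le J I"
  unfolding E_star_O_def by (auto simp: insert_commute)

lemma E_star_C_commute: "E_star_C le A B \<longleftrightarrow> E_star_C le B A"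
  unfolding E_star_C_def by (auto simp: insert_commute)

lemma E_star_C_imp_nonempty:
  assumes poset: "poset_order le" and E: "E_star_C le A B"
  shows "A \<noteq> {}"
proof
  assume "A = {}"
  have A: "is_antichain le A" and B: "is_antichain le B"
    and not_edge: "\<not> is_edge (order_polytope le) (convex hull {rho (down le A), rho (down le B)})"
    using E by (simp_all add: E_star_C_def)
  have "connected_in le B"
    using E chain_polytope_edge_iff[OF poset A B] \<open>A = {}\<close> by (simp add: E_star_C_def)
  then obtain b where "B = {b}"
    using connected_in_antichain_iff[OF B] by blast
  then have down_B: "down le B = {x. le x b}"
    by (simp add: down_def)
  have "b \<in> down le B"
    using poset_order_refl[OF poset] down_B by simp
  then have "connected_in le ({b} \<union> down le B)"
    using down_B by (intro connected_in_Un_complete_bipartite) auto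
  moreover have "{b} \<union> down le B = down le B - down le A" "down le A \<subseteq> down le B"
    using \<open>A = {}\<close> \<open>b \<in> down le B\<close> by (auto simp: down_def)
  ultimately show False
    using order_polytope_edgeI[OF is_ideal_down[OF poset] is_ideal_down[OF poset]] not_edge by metis
qed

locale maximal_ranked_poset =
  fixes le :: "'n::finite \<Rightarrow> 'n \<Rightarrow> bool" and n :: nat
  assumes poset: "poset_order le" and maximal_ranked: "maximal_ranked le n"
begin

abbreviation rk :: "'n \<Rightarrow> nat" where
  "rk \<equiv> poset_rank le"

lemma graded: "graded le n"
  using maximal_ranked by (simp add: maximal_ranked_def)

lemma rank_level_eq_rk: "rank_level le i = {x. rk x = i}"
  using rank_level_eq[OF poset graded] .

lemma le_iff_rk_less: "le x y \<longleftrightarrow> x = y \<or> rk x < rk y"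
proof
  assume "le x y"
  then show "x = y \<or> rk x < rk y"
    using poset_rank_less[OF poset graded] by blast
next
  assume "x = y \<or> rk x < rk y"
  then show "le x y"
  proof
    assume less: "rk x < rk y"
    then have "rk x \<noteq> rk y" "x \<in> rank_level le (rk x)" "y \<in> rank_level le (rk y)"
      by (simp_all add: rank_level_eq_rk)
    then have "le x y \<or> le y x"
      using maximal_ranked unfolding maximal_ranked_def by blast
    moreover have "\<not> le y x"
      using poset_rank_less[OF poset graded, of y x] less by auto
    ultimately show "le x y"
      by blast
  qed (simp add: poset_order_refl[OF poset])
qed

lemma comparable_if_rk_neq: "rk x \<noteq> rk y \<Longrightarrow> le x y \<or> le y x"
  by (cases "rk x < rk y") (auto simp: le_iff_rk_less)

lemma antichain_rk_eq:
  assumes "is_antichain le A" "a \<in> A" "b \<in> A"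
  shows "rk a = rk b"
proof (rule ccontr)
  assume "rk a \<noteq> rk b"
  then have "le a b \<or> le b a"
    by (rule comparable_if_rk_neq)
  then show False
    using assms \<open>rk a \<noteq> rk b\<close> unfolding is_antichain_def by blast
qed

lemma antichain_if_rk_eq:
  assumes "\<And>a b. a \<in> A \<Longrightarrow> b \<in> A \<Longrightarrow> rk a = rk b"
  shows "is_antichain le A"
  unfolding is_antichain_def
proof (intro ballI impI)
  fix a b
  assume "a \<in> A" "b \<in> A" "le a b"
  then show "a = b"
    using assms[of a b] le_iff_rk_less[of a b] by auto
qed

lemma connected_in_iff: "connected_in le Q \<longleftrightarrow> Q \<noteq> {} \<and> (card Q = 1 \<or> (\<exists>x\<in>Q. \<exists>y\<in>Q. rk x \<noteq> rk y))"
proof (cases "\<exists>x\<in>Q. \<exists>y\<in>Q. rk x \<noteq> rk y")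
  case True
  then obtain x y where xy: "x \<in> Q" "y \<in> Q" "rk x \<noteq> rk y"
    by blast
  let ?U = "{z \<in> Q. rk z = rk x}" and ?V = "{z \<in> Q. rk z \<noteq> rk x}"
  have "?U \<noteq> {}" "?V \<noteq> {}"
    using xy by auto
  moreover have "le u v \<or> le v u" if "u \<in> ?U" "v \<in> ?V" for u v
    using that by (intro comparable_if_rk_neq) simp
  ultimately have "connected_in le (?U \<union> ?V)"
    by (rule connected_in_Un_complete_bipartite)
  moreover have "?U \<union> ?V = Q"
    by blast
  ultimately show ?thesis
    using True xy(1) by auto
next
  case False
  then have "is_antichain le Q"
    by (intro antichain_if_rk_eq) blast
  then have "connected_in le Q \<longleftrightarrow> card Q = 1"
    by (simp add: connected_in_antichain_iff card_1_singleton_iff)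
  moreover have "card Q = 1 \<Longrightarrow> Q \<noteq> {}"
    by auto
  ultimately show ?thesis
    using False by blast
qed

lemma exists_rk: "i \<le> n \<Longrightarrow> \<exists>x. rk x = i"
  using exists_poset_rank[OF poset graded] .

lemma rk_le: "rk x \<le> n"
  using poset_rank_le[OF poset graded] .

lemma rk_le_if_mem_maxs:
  assumes "q \<in> maxs le J" "y \<in> J"
  shows "rk y \<le> rk q"
proof (rule ccontr)
  assume "\<not> rk y \<le> rk q"
  then have "le q y" "y \<noteq> q"
    using le_iff_rk_less[of q y] by auto
  then show False
    using assms unfolding maxs_def by blast
qed

lemma maxs_eq_rk:
  assumes "q \<in> maxs le J"
  shows "maxs le J = {y \<in> J. rk y = rk q}"
proof (intro set_eqI iffI)
  fix y
  assume "y \<in> maxs le J"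
  then show "y \<in> {y \<in> J. rk y = rk q}"
    using assms rk_le_if_mem_maxs[OF assms, of y] rk_le_if_mem_maxs[of y J q]
    by (auto simp: maxs_def)
next
  fix y
  assume y: "y \<in> {y \<in> J. rk y = rk q}"
  have "z = y" if "z \<in> J" "le y z" for z
    using that y rk_le_if_mem_maxs[OF assms, of z] le_iff_rk_less[of y z] by auto
  then show "y \<in> maxs le J"
    using y by (auto simp: maxs_def)
qed

lemma maxs_nonempty:
  assumes "J \<noteq> {}"
  shows "maxs le J \<noteq> {}"
proof -
  have "Max (rk ` J) \<in> rk ` J"
    using assms by (intro Max_in) auto
  then obtain q where q: "q \<in> J" "rk q = Max (rk ` J)"
    by auto
  have "z = q" if "z \<in> J" "le q z" for z
  proof -
    have "rk z \<le> rk q"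
      using that(1) q(2) by (simp add: Max_ge)
    then show ?thesis
      using that(2) le_iff_rk_less[of q z] by auto
  qed
  then have "q \<in> maxs le J"
    using q by (auto simp: maxs_def)
  then show ?thesis
    by blast
qed

lemma mem_ideal_if_rk_less: "is_ideal le J \<Longrightarrow> q \<in> J \<Longrightarrow> rk y < rk q \<Longrightarrow> y \<in> J"
  unfolding is_ideal_def using le_iff_rk_less by blast

lemma connected_in_maxs_diff:
  assumes I: "is_ideal le I" and "I \<subseteq> J" "I \<noteq> {}" and connected: "connected_in le (J - I)"
  shows "connected_in le ((maxs le I - maxs le J) \<union> (maxs le J - maxs le I))"
proof -
  have "maxs le I \<noteq> {}" "maxs le J \<noteq> {}"
    using maxs_nonempty[of I] maxs_nonempty[of J] \<open>I \<subseteq> J\<close> \<open>I \<noteq> {}\<close> by blast+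
  then obtain p q where p: "p \<in> maxs le I" and q: "q \<in> maxs le J"
    by blast
  have "p \<in> J"
    using p \<open>I \<subseteq> J\<close> by (auto simp: maxs_def)
  show ?thesis
  proof (cases "rk p = rk q")
    case True
    have "rk y \<le> rk q" if "y \<in> J" for y
      using rk_le_if_mem_maxs[OF q that] .
    moreover have "y \<in> I" if "rk y < rk q" for y
      using mem_ideal_if_rk_less[OF I, of p y] that p True by (auto simp: maxs_def)
    ultimately have "(maxs le I - maxs le J) \<union> (maxs le J - maxs le I) = J - I"
      using maxs_eq_rk[OF p] maxs_eq_rk[OF q] True \<open>I \<subseteq> J\<close> by fastforce
    then show ?thesis
      using connected by simp
  next
    case False
    then have "p \<in> maxs le I - maxs le J" "q \<in> maxs le J - maxs le I"
      using p q maxs_eq_rk[OF p] maxs_eq_rk[OF q] by auto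
    then show ?thesis
      using False connected_in_iff by blast
  qed
qed

lemma E_star_O_of_psubset:
  assumes I: "is_ideal le I" and J: "is_ideal le J" and "I \<subseteq> J" "I \<noteq> J"
  shows "E_star_O le I J \<longleftrightarrow> I = {} \<and> connected_in le J \<and> 2 \<le> card (maxs le J)"
proof -
  have O_edge: "is_edge (order_polytope le) (convex hull {rho I, rho J}) \<longleftrightarrow> connected_in le (J - I)"
    using order_polytope_edge_iff[OF I J] assms(3,4) by blast
  have C_edge: "is_edge (chain_polytope le) (convex hull {rho (maxs le I), rho (maxs le J)}) \<longleftrightarrow>
      connected_in le ((maxs le I - maxs le J) \<union> (maxs le J - maxs le I))"
    by (rule chain_polytope_edge_iff[OF poset maxs_antichain maxs_antichain])
  show ?thesis
  proof (cases "I = {}")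
    case True
    have "maxs le J \<noteq> {}"
      using maxs_nonempty[of J] assms(3,4) True by blast
    then have "card (maxs le J) = 1 \<longleftrightarrow> \<not> 2 \<le> card (maxs le J)"
      by (simp add: card_gt_0_iff less_2_cases_iff not_le)
    moreover have "connected_in le (maxs le J) \<longleftrightarrow> card (maxs le J) = 1"
      by (simp add: connected_in_antichain_iff[OF maxs_antichain] card_1_singleton_iff)
    ultimately have "connected_in le (maxs le J) \<longleftrightarrow> \<not> 2 \<le> card (maxs le J)"
      by blast
    moreover have "maxs le I = {}"
      using True by (simp add: maxs_def)
    ultimately show ?thesis
      using True O_edge C_edge I J assms(4) unfolding E_star_O_def by auto
  next
    case False
    then show ?thesis
      using connected_in_maxs_diff[OF I assms(3)] O_edge C_edge unfolding E_star_O_def by blast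
  qed
qed

lemma E_star_O_iff:
  assumes I: "is_ideal le I" and J: "is_ideal le J" and "I \<noteq> J"
  shows "E_star_O le I J \<longleftrightarrow>
    (I = {} \<and> connected_in le J \<and> 2 \<le> card (maxs le J)) \<or>
    (J = {} \<and> connected_in le I \<and> 2 \<le> card (maxs le I))"
proof -
  consider "I \<subseteq> J" | "J \<subseteq> I" | "\<not> I \<subseteq> J" "\<not> J \<subseteq> I"
    by blast
  then show ?thesis
  proof cases
    case 1
    then show ?thesis
      using E_star_O_of_psubset[OF I J 1 assms(3)] assms(3) by blast
  next
    case 2
    then show ?thesis
      using E_star_O_of_psubset[OF J I 2] E_star_O_commute assms(3) by blast
  next
    case 3
    then have "\<not> is_edge (order_polytope le) (convex hull {rho I, rho J})"
      using order_polytope_edge_iff[OF I J] by blast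
    then show ?thesis
      using 3 unfolding E_star_O_def by blast
  qed
qed

lemma antichain_subset_rank_level:
  assumes "is_antichain le A" "a \<in> A"
  shows "A \<subseteq> rank_level le (rk a)"
  using antichain_rk_eq[OF assms(1) _ assms(2)] by (auto simp: rank_level_eq_rk)

lemma down_eq_rk:
  assumes "is_antichain le A" "a \<in> A"
  shows "down le A = {x. rk x < rk a} \<union> A"
proof (intro set_eqI iffI)
  fix x
  assume "x \<in> down le A"
  then obtain p where "p \<in> A" "le x p"
    by (auto simp: down_def)
  then show "x \<in> {x. rk x < rk a} \<union> A"
    using le_iff_rk_less[of x p] antichain_rk_eq[OF assms(1) \<open>p \<in> A\<close> assms(2)] by auto
next
  fix x
  assume "x \<in> {x. rk x < rk a} \<union> A"
  then have "le x a \<or> x \<in> A"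
    using le_iff_rk_less[of x a] by auto
  then show "x \<in> down le A"
    using assms(2) poset_order_refl[OF poset, of x] by (auto simp: down_def)
qed

lemma E_star_C_rk_neq:
  assumes E: "E_star_C le A B" and "a \<in> A" "b \<in> B"
  shows "rk a \<noteq> rk b"
proof
  assume same_rk: "rk a = rk b"
  define k where "k = rk a"
  have A: "is_antichain le A" and B: "is_antichain le B"
    and not_edge: "\<not> is_edge (order_polytope le) (convex hull {rho (down le A), rho (down le B)})"
    using E by (simp_all add: E_star_C_def)
  have rk_A: "rk x = k" if "x \<in> A" for x
    using antichain_rk_eq[OF A that \<open>a \<in> A\<close>] k_def by simp
  have rk_B: "rk x = k" if "x \<in> B" for x
    using antichain_rk_eq[OF B that \<open>b \<in> B\<close>] same_rk k_def by simp
  have "down le A = {x. rk x < k} \<union> A" "down le B = {x. rk x < k} \<union> B"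
    using down_eq_rk[OF A \<open>a \<in> A\<close>] down_eq_rk[OF B \<open>b \<in> B\<close>] same_rk k_def by simp_all
  then have "down le B - down le A = B - A" "down le A - down le B = A - B"
    using rk_A rk_B by auto
  then have O_edge: "is_edge (order_polytope le) (convex hull {rho (down le A), rho (down le B)}) \<longleftrightarrow>
      (A - B = {} \<and> connected_in le (B - A)) \<or> (B - A = {} \<and> connected_in le (A - B))"
    unfolding order_polytope_edge_iff[OF is_ideal_down[OF poset] is_ideal_down[OF poset]]
      Diff_eq_empty_iff[symmetric] by simp_all
  have "is_antichain le ((A - B) \<union> (B - A))"
    using rk_A rk_B by (intro antichain_if_rk_eq) auto
  moreover have "connected_in le ((A - B) \<union> (B - A))"
    using E chain_polytope_edge_iff[OF poset A B] by (simp add: E_star_C_def)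
  ultimately obtain z where "(A - B) \<union> (B - A) = {z}"
    using connected_in_antichain_iff by blast
  then have "A - B = {} \<and> B - A = {z} \<or> B - A = {} \<and> A - B = {z}"
    unfolding set_eq_iff by (metis DiffD1 DiffD2 DiffI UnCI UnE empty_iff insert_iff)
  then show False
    using O_edge not_edge connected_in_singleton by metis
qed

lemma down_diff_eq_rk:
  assumes A: "is_antichain le A" and B: "is_antichain le B" and a: "a \<in> A" and b: "b \<in> B"
    and "rk a < rk b"
  shows "down le A \<subseteq> down le B \<and> down le B - down le A = {x. rk a \<le> rk x \<and> rk x < rk b \<and> x \<notin> A} \<union> B"
proof -
  define ka kb where "ka = rk a" and "kb = rk b"
  have "ka < kb"
    using \<open>rk a < rk b\<close> by (simp add: ka_def kb_def)
  have rk_A: "rk x = ka" if "x \<in> A" for x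
    using antichain_rk_eq[OF A that a] ka_def by simp
  have rk_B: "rk x = kb" if "x \<in> B" for x
    using antichain_rk_eq[OF B that b] kb_def by simp
  have "A \<inter> B = {}"
    using rk_A rk_B \<open>ka < kb\<close> by (metis disjoint_iff less_irrefl)
  moreover have "down le A = {x. rk x < ka} \<union> A" "down le B = {x. rk x < kb} \<union> B"
    using down_eq_rk[OF A a] down_eq_rk[OF B b] ka_def kb_def by simp_all
  ultimately have "down le A \<subseteq> down le B \<and>
      down le B - down le A = {x. ka \<le> rk x \<and> rk x < kb \<and> x \<notin> A} \<union> B"
    using rk_A rk_B \<open>ka < kb\<close> by auto
  then show ?thesis
    by (simp only: ka_def kb_def)
qed

lemma rank_levels_consecutive_if_gap_empty:
  assumes A: "is_antichain le A" and a: "a \<in> A" and "rk a < k" "k \<le> n"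
    and gap: "{x. rk a \<le> rk x \<and> rk x < k \<and> x \<notin> A} = {}"
  shows "k = rk a + 1 \<and> A = rank_level le (rk a)"
proof -
  have "A = rank_level le (rk a)"
    using gap \<open>rk a < k\<close> antichain_subset_rank_level[OF A a] by (auto simp: rank_level_eq_rk)
  moreover obtain x where x: "rk x = rk a + 1"
    using exists_rk[of "rk a + 1"] \<open>rk a < k\<close> \<open>k \<le> n\<close> by auto
  then have "x \<notin> A"
    using antichain_rk_eq[OF A _ a, of x] by auto
  then have "\<not> rk x < k"
    using gap x by auto
  ultimately show ?thesis
    using x \<open>rk a < k\<close> by simp
qed

text \<open>Here the difference of the down-sets is B together with the elements of rank in
  [rk a, rk b) outside A; being disconnected, it lies in a single level and so is B itself.\<close>
lemma E_star_C_rk_less: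
  assumes E: "E_star_C le A B" and a: "a \<in> A" and b: "b \<in> B" and "rk a < rk b"
  shows "rk b = rk a + 1 \<and> A = rank_level le (rk a) \<and> 2 \<le> card B"
proof -
  define X where "X = {x. rk a \<le> rk x \<and> rk x < rk b \<and> x \<notin> A}"
  have A: "is_antichain le A" and B: "is_antichain le B"
    and not_edge: "\<not> is_edge (order_polytope le) (convex hull {rho (down le A), rho (down le B)})"
    using E by (simp_all add: E_star_C_def)
  then have "\<not> connected_in le (X \<union> B)"
    using down_diff_eq_rk[OF A B a b \<open>rk a < rk b\<close>]
      order_polytope_edge_iff[OF is_ideal_down[OF poset] is_ideal_down[OF poset], of A B]
    unfolding X_def by auto
  moreover have "b \<in> X \<union> B"
    using b by blast
  ultimately have card_B: "card (X \<union> B) \<noteq> 1" and same_rk: "\<forall>x\<in>X \<union> B. rk x = rk b"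
    using connected_in_iff[of "X \<union> B"] by blast+
  have "X = {}"
  proof (rule ccontr)
    assume "X \<noteq> {}"
    then obtain x where "x \<in> X"
      by blast
    then have "rk x = rk b"
      using same_rk by blast
    moreover have "rk x < rk b"
      using \<open>x \<in> X\<close> by (simp add: X_def)
    ultimately show False
      by simp
  qed
  then have "card B \<noteq> 1"
    using card_B by simp
  moreover have "card B \<noteq> 0"
    using b by auto
  ultimately have "2 \<le> card B"
    by linarith
  then show ?thesis
    using rank_levels_consecutive_if_gap_empty[OF A a \<open>rk a < rk b\<close> rk_le] \<open>X = {}\<close>
    unfolding X_def by blast
qed

lemma E_star_C_of_rank_levels:
  assumes "1 \<le> l" "l \<le> n" and A: "A = rank_level le (l - 1)" and B: "B \<subseteq> rank_level le l"
    and "2 \<le> card B"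
  shows "E_star_C le A B"
proof -
  have A_eq: "A = {x. rk x = l - 1}" and rk_B: "\<And>x. x \<in> B \<Longrightarrow> rk x = l"
    using A B by (auto simp: rank_level_eq_rk)
  have "l - 1 \<le> n"
    using \<open>l \<le> n\<close> by simp
  then obtain a where "rk a = l - 1"
    using exists_rk by blast
  then have a: "a \<in> A"
    using A_eq by simp
  obtain b where b: "b \<in> B"
    using \<open>2 \<le> card B\<close> by fastforce
  have anti: "is_antichain le A" "is_antichain le B"
    using A_eq rk_B by (auto intro!: antichain_if_rk_eq)
  have "a \<in> (A - B) \<union> (B - A)" "b \<in> (A - B) \<union> (B - A)" "rk a \<noteq> rk b"
    using a b A_eq rk_B \<open>1 \<le> l\<close> by fastforce+
  then have C_edge: "is_edge (chain_polytope le) (convex hull {rho A, rho B})"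
    using chain_polytope_edge_iff[OF poset anti] connected_in_iff by blast
  have "down le A = {x. rk x < l - 1} \<union> {x. rk x = l - 1}"
    using down_eq_rk[OF anti(1) a] \<open>rk a = l - 1\<close> A_eq by simp
  also have "\<dots> = {x. rk x < l}"
    using \<open>1 \<le> l\<close> by auto
  finally have "down le B - down le A = B" "\<not> down le B \<subseteq> down le A"
    using down_eq_rk[OF anti(2) b] rk_B b by auto
  moreover have "\<not> connected_in le B"
    using connected_in_iff[of B] rk_B \<open>2 \<le> card B\<close> by auto
  ultimately have "\<not> is_edge (order_polytope le) (convex hull {rho (down le A), rho (down le B)})"
    using order_polytope_edge_iff[OF is_ideal_down[OF poset] is_ideal_down[OF poset], of A B] by auto
  moreover have "A \<noteq> B"
    using a A_eq rk_B \<open>1 \<le> l\<close> by fastforce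
  ultimately show ?thesis
    using anti C_edge by (simp add: E_star_C_def)
qed

lemma E_star_C_iff:
  assumes A: "is_antichain le A" and B: "is_antichain le B"
  shows "E_star_C le A B \<longleftrightarrow>
    (\<exists>l. 1 \<le> l \<and> l \<le> n \<and>
       ((A = rank_level le (l - 1) \<and> B \<subseteq> rank_level le l \<and> 2 \<le> card B) \<or>
        (B = rank_level le (l - 1) \<and> A \<subseteq> rank_level le l \<and> 2 \<le> card A)))"
    (is "_ \<longleftrightarrow> (\<exists>l. ?levels l)")
proof
  assume E: "E_star_C le A B"
  then have E': "E_star_C le B A"
    by (simp add: E_star_C_commute)
  obtain a b where a: "a \<in> A" and b: "b \<in> B"
    using E_star_C_imp_nonempty[OF poset E] E_star_C_imp_nonempty[OF poset E'] by blast
  consider "rk a < rk b" | "rk b < rk a"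
    using E_star_C_rk_neq[OF E a b] by linarith
  then show "\<exists>l. ?levels l"
  proof cases
    case 1
    then have "?levels (rk b)"
      using E_star_C_rk_less[OF E a b] antichain_subset_rank_level[OF B b] rk_le[of b] by auto
    then show ?thesis ..
  next
    case 2
    then have "?levels (rk a)"
      using E_star_C_rk_less[OF E' b a] antichain_subset_rank_level[OF A a] rk_le[of a] by auto
    then show ?thesis ..
  qed
next
  assume "\<exists>l. ?levels l"
  then obtain l where "1 \<le> l" "l \<le> n"
    and "(A = rank_level le (l - 1) \<and> B \<subseteq> rank_level le l \<and> 2 \<le> card B) \<or>
      (B = rank_level le (l - 1) \<and> A \<subseteq> rank_level le l \<and> 2 \<le> card A)"
    by blast
  then show "E_star_C le A B"
    using E_star_C_of_rank_levels[of l A B] E_star_C_of_rank_levels[of l B A]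
    by (auto simp: E_star_C_commute)
qed

end

theorem lemma3p1:
  fixes le :: "'n::finite \<Rightarrow> 'n \<Rightarrow> bool" and n :: nat
  assumes "poset_order le"
    and "maximal_ranked le n"
  shows "(\<forall>I J. is_ideal le I \<longrightarrow> is_ideal le J \<longrightarrow> I \<noteq> J \<longrightarrow>
            (E_star_O le I J \<longleftrightarrow>
              (I = {} \<and> connected_in le J \<and> card (maxs le J) \<ge> 2) \<or>
              (J = {} \<and> connected_in le I \<and> card (maxs le I) \<ge> 2)))
       \<and> (\<forall>A B. is_antichain le A \<longrightarrow> is_antichain le B \<longrightarrow> A \<noteq> B \<longrightarrow>
            (E_star_C le A B \<longleftrightarrow>
              (\<exists>l. 1 \<le> l \<and> l \<le> n \<and>
                 ((A = rank_level le (l - 1) \<and> B \<subseteq> rank_level le l \<and> card B \<ge> 2) \<or>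
                  (B = rank_level le (l - 1) \<and> A \<subseteq> rank_level le l \<and> card A \<ge> 2)))))"
proof -
  interpret maximal_ranked_poset le n
    using assms by unfold_locales
  show ?thesis
    by (intro conjI allI impI E_star_O_iff E_star_C_iff)
qed

end
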